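(* Fix an attacker label $A\in\mathcal{L}$. For all partial bijections $\beta$, all initial configurations $c_1,c_2$ of $\lambda^{dCG}$ extended with flow-sensitive references (either both of the form $\langle\Sigma,\mu,pc,e\rangle$ evaluated by the forcing semantics or both of the form $\langle\Sigma,\mu,pc,t\rangle$ evaluated by the thunk semantics) and environments $\theta_1,\theta_2$ with $\vdash\mathbf{Valid}(c_1,\theta_1)$, $\vdash\mathbf{Valid}(c_2,\theta_2)$, $c_1\approx^\beta_A c_2$ and $\theta_1\approx^\beta_A\theta_2$: if $c_1\Downarrow^{\theta_1}c_1'$ and $c_2\Downarrow^{\theta_2}c_2'$, then there exists a partial bijection $\beta'\supseteq\beta$ such that $c_1'\approx^{\beta'}_A c_2'$.
   Context: Fix a lattice $(\mathcal{L},\sqsubseteq,\sqcup)$ of labels. The calculus has types $\tau::=\mathbf{unit}\mid\tau_1\to\tau_2\mid\tau_1+\tau_2\mid\tau_1\times\tau_2\mid\mathcal{L}\mid\mathbf{LIO}\,\tau\mid\mathbf{Labeled}\,\tau\mid\mathbf{Ref}\,s\,\tau$, $s\in\{I,S\}$ (standard simple typing; the tag $s$ determines which reference rules apply), values $v::=()\mid(x.e,\theta)\mid\mathbf{inl}(v)\mid\mathbf{inr}(v)\mid(v_1,v_2)\mid\ell\mid\mathbf{Labeled}\,\ell\,v\mid(t,\theta)\mid n_\ell\mid n$ ($n_\ell$ flow-insensitive reference into memory $\ell$, $n$ flow-sensitive heap address), expressions $e::=x\mid\lambda x.e\mid e_1\,e_2\mid()\mid\ell\mid(e_1,e_2)\mid\mathbf{fst}(e)\mid\mathbf{snd}(e)\mid\mathbf{inl}(e)\mid\mathbf{inr}(e)\mid\mathbf{case}(e,x.e_1,x.e_2)\mid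 e_1\sqsubseteq^{?}e_2\mid t$, thunks $t::=\mathbf{return}(e)\mid\mathbf{bind}(e,x.e)\mid\mathbf{unlabel}(e)\mid\mathbf{toLabeled}(e)\mid\mathbf{labelOf}(e)\mid\mathbf{getLabel}\mid\mathbf{taint}(e)\mid\mathbf{new}(e)\mid\,!e\mid e_1:=e_2\mid\mathbf{labelOfRef}(e)$; environments are finite maps from variables to values. Memories are lists of values, a store $\Sigma$ maps each label to a memory, a heap $\mu$ is a list of values of the form $\mathbf{Labeled}\,\ell\,v$; $|X|$, $X[n]$, $X[n\mapsto y]$ denote length, $n$-th entry (from 0), replacement (append if $n=|X|$). Pure semantics $e\Downarrow^\theta v$: $x\Downarrow\theta(x)$; $()\Downarrow()$; $\ell\Downarrow\ell$; $\lambda x.e\Downarrow(x.e,\theta)$; $t\Downarrow(t,\theta)$; $e_1\,e_2\Downarrow v$ if $e_1\Downarrow^\theta(x.e,\theta')$, $e_2\Downarrow^\theta v_2$, $e\Downarrow^{\theta'[x\mapsto v_2]}v$; pairs, projections, injections componentwise; $\mathbf{case}(e,x.e_1,x.e_2)\Downarrow v$ if $e\Downarrow\mathbf{inl}(v_1)$ and $e_1\Downarrow^{\theta[x\mapsto v_1]}v$, or $e\Downarrow\mathbf{inr}(v_2)$ and $e_2\Downarrow^{\theta[x\mapsto v_2]}v$; $e_1\sqsubseteq^?e_2$ evaluates both to labels $\ell_1,\ell_2$ and yields $\mathbf{inl}(())$ if $\ell_1\sqsubseteq\ell_2$, else $\mathbf{inr}(())$. Forcing semantics: $\langle\Sigma,\mu,pc,e\rangle\Downarrow^\theta\langle\Sigma',\mu',pc',v\rangle$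 iff $e\Downarrow^\theta(t,\theta')$ and $\langle\Sigma,\mu,pc,t\rangle\Downarrow^{\theta'}\langle\Sigma',\mu',pc',v\rangle$. Thunk semantics (store/heap unchanged unless stated): (Return) $e\Downarrow^\theta v$ gives $\langle\Sigma,\mu,pc,v\rangle$. (Bind) forcing $e_1$ from $\langle\Sigma,\mu,pc\rangle$ gives $\langle\Sigma',\mu',pc',v_1\rangle$, forcing $e_2$ in $\theta[x\mapsto v_1]$ from $\langle\Sigma',\mu',pc'\rangle$ gives the result. (ToLabeled) forcing $e$ gives $\langle\Sigma',\mu',pc',v\rangle$; result $\langle\Sigma',\mu',pc,\mathbf{Labeled}\,pc'\,v\rangle$. (Unlabel) $e\Downarrow\mathbf{Labeled}\,\ell\,v$; result $\langle\Sigma,\mu,pc\sqcup\ell,v\rangle$. (LabelOf) $e\Downarrow\mathbf{Labeled}\,\ell\,v$; result $\langle\Sigma,\mu,pc\sqcup\ell,\ell\rangle$. (GetLabel) $\langle\Sigma,\mu,pc,pc\rangle$. (Taint) $e\Downarrow\ell$; result $\langle\Sigma,\mu,pc\sqcup\ell,()\rangle$. For $\mathbf{Ref}\,I$: (New) $e\Downarrow\mathbf{Labeled}\,\ell\,v$, $pc\sqsubseteq\ell$, $n=|\Sigma(\ell)|$: result $n_\ell$ with store $\Sigma[\ell\mapsto\Sigma(\ell)[n\mapsto v]]$; (Read) $e\Downarrow n_\ell$, $\Sigma(\ell)[n]=v$: result $\langle\Sigma,\mu,pc\sqcup\ell,v\rangle$; (Write) $e_1\Downarrow n_{\ell_1}$,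 $e_2\Downarrow\mathbf{Labeled}\,\ell_2\,v$, $\ell_2\sqsubseteq\ell_1$, $pc\sqsubseteq\ell_1$: result $()$ with store $\Sigma[\ell_1\mapsto\Sigma(\ell_1)[n\mapsto v]]$; (LabelOfRef) $e\Downarrow n_\ell$: result $\langle\Sigma,\mu,pc\sqcup\ell,\ell\rangle$. For $\mathbf{Ref}\,S$: (New-FS) $e\Downarrow\mathbf{Labeled}\,\ell\,v$, $pc\sqsubseteq\ell$, $n=|\mu|$: result $n$ with heap $\mu[n\mapsto\mathbf{Labeled}\,\ell\,v]$; (Read-FS) $e\Downarrow n$, $\mu[n]=\mathbf{Labeled}\,\ell\,v$: result $\langle\Sigma,\mu,pc\sqcup\ell,v\rangle$; (LabelOfRef-FS) $e\Downarrow n$, $\mu[n]=\mathbf{Labeled}\,\ell\,v$: result $\langle\Sigma,\mu,pc\sqcup\ell,\ell\rangle$; (Write-FS) $e_1\Downarrow n$, $e_2\Downarrow\mathbf{Labeled}\,\ell'\,v$, $\mu[n]=\mathbf{Labeled}\,\ell\,v_0$, $pc\sqsubseteq\ell$: result $()$ with heap $\mu[n\mapsto\mathbf{Labeled}\,(pc\sqcup\ell')\,v]$. Final configurations are $\langle\Sigma,\mu,pc,v\rangle$. A partial bijection is a finite injective partial function $\beta:\mathbb N\rightharpoonup\mathbb N$; $\beta\subseteq\beta'$ is inclusion of graphs. $A$-equivalence up to $\beta$ on values: $\mathbf{Labeled}\,\ell\,v_1\approx^\beta_A\mathbf{Labeled}\,\ell\,v_2$ if $\ell\sqsubseteq A$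 and $v_1\approx^\beta_A v_2$; $\mathbf{Labeled}\,\ell_1\,v_1\approx^\beta_A\mathbf{Labeled}\,\ell_2\,v_2$ if $\ell_1,\ell_2\not\sqsubseteq A$; $()$, labels: equal; injections and pairs homomorphically; function and thunk closures related if bodies are $\alpha$-equivalent and environments are related (same domain, pointwise); $n_\ell\approx n_\ell$ if $\ell\sqsubseteq A$; $(n_1)_{\ell_1}\approx(n_2)_{\ell_2}$ if $\ell_1,\ell_2\not\sqsubseteq A$; heap addresses $n_1\approx^\beta_A n_2$ iff $\beta(n_1)=n_2$. Memories at label $\ell$: always related if $\ell\not\sqsubseteq A$, else same length and pointwise related; stores pointwise. Heaps: $\mu_1\approx^\beta_A\mu_2$ iff $\mathrm{dom}(\beta)\subseteq\{0,\dots,|\mu_1|-1\}$, $\mathrm{rng}(\beta)\subseteq\{0,\dots,|\mu_2|-1\}$, and $\mu_1[n_1]\approx^\beta_A\mu_2[n_2]$ whenever $\beta(n_1)=n_2$. Initial configurations related iff stores and heaps related up to $\beta$, program counters equal, and expressions (resp. thunks) $\alpha$-equivalent. Final configurations $\langle\Sigma_1,\mu_1,pc_1,v_1\rangle\approx^\beta_A\langle\Sigma_2,\mu_2,pc_2,v_2\rangle$ iff stores and heaps are related up to $\beta$ and either $pc_1,pc_2\not\sqsubseteq A$, or $pc_1=pc_2\sqsubseteq A$ and $v_1\approx^\beta_A v_2$. Validity: $n\vdash\mathbf{Valid}(x)$ means every flow-sensitive heap address occurring in $x$ (including inside closures' environments and labeled values) is $<n$. $\vdash\mathbf{Valid}(\langle\Sigma,\mu,pc,e\rangle,\theta)$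 (likewise with a thunk) iff with $n=|\mu|$: $n\vdash\mathbf{Valid}(\Sigma)$, $n\vdash\mathbf{Valid}(\mu)$, $n\vdash\mathbf{Valid}(\theta)$. *)

theory Defs
  imports Main
begin

section \<open>Syntax (de Bruijn indices for variables)\<close>

datatype reftag = RefI | RefS

datatype 'l expr =
    Var nat
  | Lam "'l expr"
  | App "'l expr" "'l expr"
  | EUnit
  | ELbl 'l
  | EPair "'l expr" "'l expr"
  | Fst "'l expr"
  | Snd "'l expr"
  | EInl "'l expr"
  | EInr "'l expr"
  | Case "'l expr" "'l expr" "'l expr"
  | LeqTest "'l expr" "'l expr"
  | Thk "'l thunk"
and 'l thunk =
    Return "'l expr"
  | Bind "'l expr" "'l expr"
  | Unlabel "'l expr"
  | ToLabeled "'l expr"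
  | LabelOf "'l expr"
  | GetLabel
  | Taint "'l expr"
  | New reftag "'l expr"
  | Read "'l expr"
  | Write "'l expr" "'l expr"
  | LabelOfRef "'l expr"

datatype 'l val =
    VUnit
  | VClos "'l expr" "'l val list"
  | VInl "'l val"
  | VInr "'l val"
  | VPair "'l val" "'l val"
  | VLbl 'l
  | VLabeled 'l "'l val"
  | VThunk "'l thunk" "'l val list"
  | VRefI nat 'l     \<comment> \<open>flow-insensitive reference n_l\<close>
  | VRefS nat        \<comment> \<open>flow-sensitive heap address n\<close>

type_synonym 'l env = "'l val list"
type_synonym 'l store = "'l \<Rightarrow> 'l val list"
type_synonym 'l heap = "'l val list"

datatype 'l config =
    CExp "'l store" "'l heap" 'l "'l expr"
  | CThk "'l store" "'l heap" 'l "'l thunk"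

type_synonym 'l final = "'l store \<times> 'l heap \<times> 'l \<times> 'l val"

text \<open>X[n |-> y]: replacement, or append if n = |X| (only used when n <= |X|).\<close>
definition lupd :: "'a list \<Rightarrow> nat \<Rightarrow> 'a \<Rightarrow> 'a list" where
  "lupd X n y = (if n = length X then X @ [y] else X[n := y])"

inductive peval :: "'l::lattice env \<Rightarrow> 'l expr \<Rightarrow> 'l val \<Rightarrow> bool" where
  PVar: "i < length \<theta> \<Longrightarrow> peval \<theta> (Var i) (\<theta> ! i)"
| PUnit: "peval \<theta> EUnit VUnit"
| PLbl: "peval \<theta> (ELbl l) (VLbl l)"
| PLam: "peval \<theta> (Lam e) (VClos e \<theta>)"
| PThk: "peval \<theta> (Thk t) (VThunk t \<theta>)"
| PApp: "peval \<theta> e1 (VClos e \<theta>') \<Longrightarrow> peval \<theta> e2 v2 \<Longrightarrow> peval (v2 # \<theta>') e v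
         \<Longrightarrow> peval \<theta> (App e1 e2) v"
| PPair: "peval \<theta> e1 v1 \<Longrightarrow> peval \<theta> e2 v2 \<Longrightarrow> peval \<theta> (EPair e1 e2) (VPair v1 v2)"
| PFst: "peval \<theta> e (VPair v1 v2) \<Longrightarrow> peval \<theta> (Fst e) v1"
| PSnd: "peval \<theta> e (VPair v1 v2) \<Longrightarrow> peval \<theta> (Snd e) v2"
| PInl: "peval \<theta> e v \<Longrightarrow> peval \<theta> (EInl e) (VInl v)"
| PInr: "peval \<theta> e v \<Longrightarrow> peval \<theta> (EInr e) (VInr v)"
| PCaseL: "peval \<theta> e (VInl v1) \<Longrightarrow> peval (v1 # \<theta>) e1 v \<Longrightarrow> peval \<theta> (Case e e1 e2) v"
| PCaseR: "peval \<theta> e (VInr v2) \<Longrightarrow> peval (v2 # \<theta>) e2 v \<Longrightarrow> peval \<theta> (Case e e1 e2) v"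
| PLeqT: "peval \<theta> e1 (VLbl l1) \<Longrightarrow> peval \<theta> e2 (VLbl l2) \<Longrightarrow> l1 \<le> l2
          \<Longrightarrow> peval \<theta> (LeqTest e1 e2) (VInl VUnit)"
| PLeqF: "peval \<theta> e1 (VLbl l1) \<Longrightarrow> peval \<theta> e2 (VLbl l2) \<Longrightarrow> \<not> l1 \<le> l2
          \<Longrightarrow> peval \<theta> (LeqTest e1 e2) (VInr VUnit)"

inductive
  force :: "'l::lattice store \<Rightarrow> 'l heap \<Rightarrow> 'l \<Rightarrow> 'l expr \<Rightarrow> 'l env \<Rightarrow>
            'l store \<Rightarrow> 'l heap \<Rightarrow> 'l \<Rightarrow> 'l val \<Rightarrow> bool"
and
  teval :: "'l::lattice store \<Rightarrow> 'l heap \<Rightarrow> 'l \<Rightarrow> 'l thunk \<Rightarrow> 'l env \<Rightarrow>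
            'l store \<Rightarrow> 'l heap \<Rightarrow> 'l \<Rightarrow> 'l val \<Rightarrow> bool"
where
  Force: "peval \<theta> e (VThunk t \<theta>') \<Longrightarrow> teval \<Sigma> \<mu> pc t \<theta>' \<Sigma>' \<mu>' pc' v
          \<Longrightarrow> force \<Sigma> \<mu> pc e \<theta> \<Sigma>' \<mu>' pc' v"
| TReturn: "peval \<theta> e v \<Longrightarrow> teval \<Sigma> \<mu> pc (Return e) \<theta> \<Sigma> \<mu> pc v"
| TBind: "force \<Sigma> \<mu> pc e1 \<theta> \<Sigma>' \<mu>' pc' v1 \<Longrightarrow> force \<Sigma>' \<mu>' pc' e2 (v1 # \<theta>) \<Sigma>'' \<mu>'' pc'' v
          \<Longrightarrow> teval \<Sigma> \<mu> pc (Bind e1 e2) \<theta> \<Sigma>'' \<mu>'' pc'' v"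
| TToLabeled: "force \<Sigma> \<mu> pc e \<theta> \<Sigma>' \<mu>' pc' v
          \<Longrightarrow> teval \<Sigma> \<mu> pc (ToLabeled e) \<theta> \<Sigma>' \<mu>' pc (VLabeled pc' v)"
| TUnlabel: "peval \<theta> e (VLabeled l v) \<Longrightarrow> teval \<Sigma> \<mu> pc (Unlabel e) \<theta> \<Sigma> \<mu> (sup pc l) v"
| TLabelOf: "peval \<theta> e (VLabeled l v) \<Longrightarrow> teval \<Sigma> \<mu> pc (LabelOf e) \<theta> \<Sigma> \<mu> (sup pc l) (VLbl l)"
| TGetLabel: "teval \<Sigma> \<mu> pc GetLabel \<theta> \<Sigma> \<mu> pc (VLbl pc)"
| TTaint: "peval \<theta> e (VLbl l) \<Longrightarrow> teval \<Sigma> \<mu> pc (Taint e) \<theta> \<Sigma> \<mu> (sup pc l) VUnit"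
| TNew: "peval \<theta> e (VLabeled l v) \<Longrightarrow> pc \<le> l \<Longrightarrow> n = length (\<Sigma> l)
          \<Longrightarrow> teval \<Sigma> \<mu> pc (New RefI e) \<theta> (\<Sigma>(l := lupd (\<Sigma> l) n v)) \<mu> pc (VRefI n l)"
| TRead: "peval \<theta> e (VRefI n l) \<Longrightarrow> n < length (\<Sigma> l) \<Longrightarrow> \<Sigma> l ! n = v
          \<Longrightarrow> teval \<Sigma> \<mu> pc (Read e) \<theta> \<Sigma> \<mu> (sup pc l) v"
| TWrite: "peval \<theta> e1 (VRefI n l1) \<Longrightarrow> peval \<theta> e2 (VLabeled l2 v) \<Longrightarrow> l2 \<le> l1 \<Longrightarrow> pc \<le> l1
          \<Longrightarrow> n \<le> length (\<Sigma> l1)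
          \<Longrightarrow> teval \<Sigma> \<mu> pc (Write e1 e2) \<theta> (\<Sigma>(l1 := lupd (\<Sigma> l1) n v)) \<mu> pc VUnit"
| TLabelOfRef: "peval \<theta> e (VRefI n l)
          \<Longrightarrow> teval \<Sigma> \<mu> pc (LabelOfRef e) \<theta> \<Sigma> \<mu> (sup pc l) (VLbl l)"
| TNewFS: "peval \<theta> e (VLabeled l v) \<Longrightarrow> pc \<le> l \<Longrightarrow> n = length \<mu>
          \<Longrightarrow> teval \<Sigma> \<mu> pc (New RefS e) \<theta> \<Sigma> (lupd \<mu> n (VLabeled l v)) pc (VRefS n)"
| TReadFS: "peval \<theta> e (VRefS n) \<Longrightarrow> n < length \<mu> \<Longrightarrow> \<mu> ! n = VLabeled l v
          \<Longrightarrow> teval \<Sigma> \<mu> pc (Read e) \<theta> \<Sigma> \<mu> (sup pc l) v"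
| TLabelOfRefFS: "peval \<theta> e (VRefS n) \<Longrightarrow> n < length \<mu> \<Longrightarrow> \<mu> ! n = VLabeled l v
          \<Longrightarrow> teval \<Sigma> \<mu> pc (LabelOfRef e) \<theta> \<Sigma> \<mu> (sup pc l) (VLbl l)"
| TWriteFS: "peval \<theta> e1 (VRefS n) \<Longrightarrow> peval \<theta> e2 (VLabeled l' v) \<Longrightarrow> n < length \<mu>
          \<Longrightarrow> \<mu> ! n = VLabeled l v0 \<Longrightarrow> pc \<le> l
          \<Longrightarrow> teval \<Sigma> \<mu> pc (Write e1 e2) \<theta> \<Sigma> (lupd \<mu> n (VLabeled (sup pc l') v)) pc VUnit"

inductive cfg_eval :: "'l::lattice config \<Rightarrow> 'l env \<Rightarrow> 'l final \<Rightarrow> bool" where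
  "force \<Sigma> \<mu> pc e \<theta> \<Sigma>' \<mu>' pc' v \<Longrightarrow> cfg_eval (CExp \<Sigma> \<mu> pc e) \<theta> (\<Sigma>', \<mu>', pc', v)"
| "teval \<Sigma> \<mu> pc t \<theta> \<Sigma>' \<mu>' pc' v \<Longrightarrow> cfg_eval (CThk \<Sigma> \<mu> pc t) \<theta> (\<Sigma>', \<mu>', pc', v)"

definition pbij :: "(nat \<rightharpoonup> nat) \<Rightarrow> bool" where
  "pbij \<beta> \<longleftrightarrow> finite (dom \<beta>) \<and> inj_on \<beta> (dom \<beta>)"

inductive veq :: "'l::lattice \<Rightarrow> (nat \<rightharpoonup> nat) \<Rightarrow> 'l val \<Rightarrow> 'l val \<Rightarrow> bool"
  for A :: "'l" and \<beta> :: "nat \<rightharpoonup> nat" where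
  EqLabeledLow: "l \<le> A \<Longrightarrow> veq A \<beta> v1 v2 \<Longrightarrow> veq A \<beta> (VLabeled l v1) (VLabeled l v2)"
| EqLabeledHigh: "\<not> l1 \<le> A \<Longrightarrow> \<not> l2 \<le> A \<Longrightarrow> veq A \<beta> (VLabeled l1 v1) (VLabeled l2 v2)"
| EqUnit: "veq A \<beta> VUnit VUnit"
| EqLbl: "veq A \<beta> (VLbl l) (VLbl l)"
| EqInl: "veq A \<beta> v1 v2 \<Longrightarrow> veq A \<beta> (VInl v1) (VInl v2)"
| EqInr: "veq A \<beta> v1 v2 \<Longrightarrow> veq A \<beta> (VInr v1) (VInr v2)"
| EqPair: "veq A \<beta> v1 v2 \<Longrightarrow> veq A \<beta> w1 w2 \<Longrightarrow> veq A \<beta> (VPair v1 w1) (VPair v2 w2)"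
| EqClos: "list_all2 (veq A \<beta>) \<theta>1 \<theta>2 \<Longrightarrow> veq A \<beta> (VClos e \<theta>1) (VClos e \<theta>2)"
| EqThunk: "list_all2 (veq A \<beta>) \<theta>1 \<theta>2 \<Longrightarrow> veq A \<beta> (VThunk t \<theta>1) (VThunk t \<theta>2)"
| EqRefLow: "l \<le> A \<Longrightarrow> veq A \<beta> (VRefI n l) (VRefI n l)"
| EqRefHigh: "\<not> l1 \<le> A \<Longrightarrow> \<not> l2 \<le> A \<Longrightarrow> veq A \<beta> (VRefI n1 l1) (VRefI n2 l2)"
| EqAddr: "\<beta> n1 = Some n2 \<Longrightarrow> veq A \<beta> (VRefS n1) (VRefS n2)"
monos list_all2_mono

definition env_eq :: "'l::lattice \<Rightarrow> (nat \<rightharpoonup> nat) \<Rightarrow> 'l env \<Rightarrow> 'l env \<Rightarrow> bool" where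
  "env_eq A \<beta> \<theta>1 \<theta>2 \<longleftrightarrow> list_all2 (veq A \<beta>) \<theta>1 \<theta>2"

definition mem_eq :: "'l::lattice \<Rightarrow> (nat \<rightharpoonup> nat) \<Rightarrow> 'l \<Rightarrow> 'l val list \<Rightarrow> 'l val list \<Rightarrow> bool" where
  "mem_eq A \<beta> l M1 M2 \<longleftrightarrow> (\<not> l \<le> A \<or> (length M1 = length M2 \<and> list_all2 (veq A \<beta>) M1 M2))"

definition store_eq :: "'l::lattice \<Rightarrow> (nat \<rightharpoonup> nat) \<Rightarrow> 'l store \<Rightarrow> 'l store \<Rightarrow> bool" where
  "store_eq A \<beta> \<Sigma>1 \<Sigma>2 \<longleftrightarrow> (\<forall>l. mem_eq A \<beta> l (\<Sigma>1 l) (\<Sigma>2 l))"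

definition heap_eq :: "'l::lattice \<Rightarrow> (nat \<rightharpoonup> nat) \<Rightarrow> 'l heap \<Rightarrow> 'l heap \<Rightarrow> bool" where
  "heap_eq A \<beta> \<mu>1 \<mu>2 \<longleftrightarrow>
     dom \<beta> \<subseteq> {..<length \<mu>1} \<and> ran \<beta> \<subseteq> {..<length \<mu>2} \<and>
     (\<forall>n1 n2. \<beta> n1 = Some n2 \<longrightarrow> veq A \<beta> (\<mu>1 ! n1) (\<mu>2 ! n2))"

text \<open>Initial configurations: alpha-equivalence is syntactic equality (de Bruijn).\<close>
fun cfg_eq :: "'l::lattice \<Rightarrow> (nat \<rightharpoonup> nat) \<Rightarrow> 'l config \<Rightarrow> 'l config \<Rightarrow> bool" where
  "cfg_eq A \<beta> (CExp \<Sigma>1 \<mu>1 pc1 e1) (CExp \<Sigma>2 \<mu>2 pc2 e2) \<longleftrightarrow>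
     store_eq A \<beta> \<Sigma>1 \<Sigma>2 \<and> heap_eq A \<beta> \<mu>1 \<mu>2 \<and> pc1 = pc2 \<and> e1 = e2"
| "cfg_eq A \<beta> (CThk \<Sigma>1 \<mu>1 pc1 t1) (CThk \<Sigma>2 \<mu>2 pc2 t2) \<longleftrightarrow>
     store_eq A \<beta> \<Sigma>1 \<Sigma>2 \<and> heap_eq A \<beta> \<mu>1 \<mu>2 \<and> pc1 = pc2 \<and> t1 = t2"
| "cfg_eq A \<beta> _ _ \<longleftrightarrow> False"

fun final_eq :: "'l::lattice \<Rightarrow> (nat \<rightharpoonup> nat) \<Rightarrow> 'l final \<Rightarrow> 'l final \<Rightarrow> bool" where
  "final_eq A \<beta> (\<Sigma>1, \<mu>1, pc1, v1) (\<Sigma>2, \<mu>2, pc2, v2) \<longleftrightarrow>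
     store_eq A \<beta> \<Sigma>1 \<Sigma>2 \<and> heap_eq A \<beta> \<mu>1 \<mu>2 \<and>
     ((\<not> pc1 \<le> A \<and> \<not> pc2 \<le> A) \<or> (pc1 = pc2 \<and> pc1 \<le> A \<and> veq A \<beta> v1 v2))"

fun valid_val :: "nat \<Rightarrow> 'l val \<Rightarrow> bool" where
  "valid_val n VUnit = True"
| "valid_val n (VClos e \<theta>) = (\<forall>v\<in>set \<theta>. valid_val n v)"
| "valid_val n (VInl v) = valid_val n v"
| "valid_val n (VInr v) = valid_val n v"
| "valid_val n (VPair v w) = (valid_val n v \<and> valid_val n w)"
| "valid_val n (VLbl l) = True"
| "valid_val n (VLabeled l v) = valid_val n v"
| "valid_val n (VThunk t \<theta>) = (\<forall>v\<in>set \<theta>. valid_val n v)"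
| "valid_val n (VRefI m l) = True"
| "valid_val n (VRefS m) = (m < n)"

definition valid_store :: "nat \<Rightarrow> 'l store \<Rightarrow> bool" where
  "valid_store n \<Sigma> \<longleftrightarrow> (\<forall>l. \<forall>v\<in>set (\<Sigma> l). valid_val n v)"

definition valid_list :: "nat \<Rightarrow> 'l val list \<Rightarrow> bool" where
  "valid_list n xs \<longleftrightarrow> (\<forall>v\<in>set xs. valid_val n v)"

fun valid_cfg :: "'l config \<Rightarrow> 'l env \<Rightarrow> bool" where
  "valid_cfg (CExp \<Sigma> \<mu> pc e) \<theta> \<longleftrightarrow>
     valid_store (length \<mu>) \<Sigma> \<and> valid_list (length \<mu>) \<mu> \<and> valid_list (length \<mu>) \<theta>"
| "valid_cfg (CThk \<Sigma> \<mu> pc t) \<theta> \<longleftrightarrow>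
     valid_store (length \<mu>) \<Sigma> \<and> valid_list (length \<mu>) \<mu> \<and> valid_list (length \<mu>) \<theta>"

end

(* The two runs are compared by simultaneous induction on the derivation of the first one.
   While the program counter is below A, both runs apply the rule for the same thunk, because
   pure evaluation maps A-equivalent environments to A-equivalent values; in particular both
   see related references and labels, so their writes keep the stores and heaps related. The
   bijection only grows when both runs allocate a flow-sensitive cell, pairing the two fresh
   addresses. Once the program counter is above A (after a bind whose first part raised it),
   the runs need not correspond at all, but each is confined: it leaves the memories of labels
   below A untouched and only overwrites heap cells holding high-labelled values with
   high-labelled values, which preserves the relation of stores and heaps under the same
   bijection. *)

theory Submission
  imports Defs
begin

inductive_simps veq_VLabeled_iff: "veq A \<beta> (VLabeled l1 v1) (VLabeled l2 v2)"
inductive_simps veq_VRefI_iff: "veq A \<beta> (VRefI n1 l1) (VRefI n2 l2)"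
inductive_simps veq_VRefS_iff: "veq A \<beta> (VRefS n1) (VRefS n2)"
inductive_simps veq_VLbl_iff: "veq A \<beta> (VLbl l1) (VLbl l2)"
inductive_simps veq_VRefI_VRefS: "veq A \<beta> (VRefI n1 l1) (VRefS n2)"
inductive_simps veq_VRefS_VRefI: "veq A \<beta> (VRefS n1) (VRefI n2 l2)"
inductive_simps veq_VThunk_iff: "veq A \<beta> (VThunk t1 \<theta>1) (VThunk t2 \<theta>2)"

inductive_cases veq_elims:
  "veq A \<beta> (VClos e \<theta>) w" "veq A \<beta> (VThunk t \<theta>) w" "veq A \<beta> (VInl v) w" "veq A \<beta> (VInr v) w"
  "veq A \<beta> (VPair v u) w" "veq A \<beta> (VLbl l) w" "veq A \<beta> (VRefI n l) w" "veq A \<beta> (VRefS n) w"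

inductive_cases peval_elims:
  "peval \<theta> (Var i) v" "peval \<theta> EUnit v" "peval \<theta> (ELbl l) v" "peval \<theta> (Lam e) v"
  "peval \<theta> (Thk t) v" "peval \<theta> (App e1 e2) v" "peval \<theta> (EPair e1 e2) v" "peval \<theta> (Fst e) v"
  "peval \<theta> (Snd e) v" "peval \<theta> (EInl e) v" "peval \<theta> (EInr e) v" "peval \<theta> (Case e e1 e2) v"
  "peval \<theta> (LeqTest e1 e2) v"

inductive_cases force_elim: "force \<Sigma> \<mu> pc e \<theta> \<Sigma>' \<mu>' pc' v"

inductive_cases teval_elims:
  "teval \<Sigma> \<mu> pc (Return e) \<theta> \<Sigma>' \<mu>' pc' v"
  "teval \<Sigma> \<mu> pc (Bind e1 e2) \<theta> \<Sigma>' \<mu>' pc' v"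
  "teval \<Sigma> \<mu> pc (ToLabeled e) \<theta> \<Sigma>' \<mu>' pc' v"
  "teval \<Sigma> \<mu> pc (Unlabel e) \<theta> \<Sigma>' \<mu>' pc' v"
  "teval \<Sigma> \<mu> pc (LabelOf e) \<theta> \<Sigma>' \<mu>' pc' v"
  "teval \<Sigma> \<mu> pc GetLabel \<theta> \<Sigma>' \<mu>' pc' v"
  "teval \<Sigma> \<mu> pc (Taint e) \<theta> \<Sigma>' \<mu>' pc' v"
  "teval \<Sigma> \<mu> pc (New RefI e) \<theta> \<Sigma>' \<mu>' pc' v"
  "teval \<Sigma> \<mu> pc (New RefS e) \<theta> \<Sigma>' \<mu>' pc' v"
  "teval \<Sigma> \<mu> pc (Read e) \<theta> \<Sigma>' \<mu>' pc' v"
  "teval \<Sigma> \<mu> pc (Write e1 e2) \<theta> \<Sigma>' \<mu>' pc' v"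
  "teval \<Sigma> \<mu> pc (LabelOfRef e) \<theta> \<Sigma>' \<mu>' pc' v"

lemma veq_map_le_mono: "veq A \<beta> v1 v2 \<Longrightarrow> \<beta> \<subseteq>\<^sub>m \<beta>' \<Longrightarrow> veq A \<beta>' v1 v2"
  by (induction rule: veq.induct)
    (auto intro: veq.intros elim: list_all2_mono simp: map_le_def dom_def)

lemma list_all2_veq_map_le_mono:
  "list_all2 (veq A \<beta>) xs ys \<Longrightarrow> \<beta> \<subseteq>\<^sub>m \<beta>' \<Longrightarrow> list_all2 (veq A \<beta>') xs ys"
  by (auto elim: list_all2_mono intro: veq_map_le_mono)

lemma peval_veq:
  "peval \<theta>1 e v1 \<Longrightarrow> peval \<theta>2 e v2 \<Longrightarrow> env_eq A \<beta> \<theta>1 \<theta>2 \<Longrightarrow> veq A \<beta> v1 v2"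
  unfolding env_eq_def
proof (induction arbitrary: \<theta>2 v2 rule: peval.induct)
  case (PApp \<theta> e1 e \<theta>' e2 w v)
  from PApp.prems(1) obtain e' \<theta>2' w2 where
    "peval \<theta>2 e1 (VClos e' \<theta>2')" "peval \<theta>2 e2 w2" "peval (w2 # \<theta>2') e' v2"
    by (auto elim: peval_elims)
  with PApp show ?case by (fastforce elim: veq_elims)
qed (fastforce elim!: peval_elims elim: veq_elims intro: veq.intros simp: list_all2_nthD)+

section \<open>Confinement under a high program counter\<close>

definition low_mems_unchanged :: "'l::lattice \<Rightarrow> 'l store \<Rightarrow> 'l store \<Rightarrow> bool" where
  "low_mems_unchanged A \<Sigma> \<Sigma>' \<longleftrightarrow> (\<forall>l. l \<le> A \<longrightarrow> \<Sigma>' l = \<Sigma> l)"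

definition high_labeled :: "'l::lattice \<Rightarrow> 'l val \<Rightarrow> bool" where
  "high_labeled A v \<longleftrightarrow> (\<exists>l w. v = VLabeled l w \<and> \<not> l \<le> A)"

definition heap_high_extension :: "'l::lattice \<Rightarrow> 'l heap \<Rightarrow> 'l heap \<Rightarrow> bool" where
  "heap_high_extension A \<mu> \<mu>' \<longleftrightarrow> length \<mu> \<le> length \<mu>' \<and>
     (\<forall>n < length \<mu>. \<mu>' ! n = \<mu> ! n \<or> high_labeled A (\<mu> ! n) \<and> high_labeled A (\<mu>' ! n))"

lemma low_mems_unchanged_refl: "low_mems_unchanged A \<Sigma> \<Sigma>"
  by (simp add: low_mems_unchanged_def)

lemma low_mems_unchanged_trans:
  "low_mems_unchanged A \<Sigma> \<Sigma>' \<Longrightarrow> low_mems_unchanged A \<Sigma>' \<Sigma>'' \<Longrightarrow> low_mems_unchanged A \<Sigma> \<Sigma>''"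
  by (simp add: low_mems_unchanged_def)

lemma heap_high_extension_refl: "heap_high_extension A \<mu> \<mu>"
  by (simp add: heap_high_extension_def)

lemma heap_high_extension_trans:
  "heap_high_extension A \<mu> \<mu>' \<Longrightarrow> heap_high_extension A \<mu>' \<mu>'' \<Longrightarrow> heap_high_extension A \<mu> \<mu>''"
  unfolding heap_high_extension_def by (metis order_trans less_le_trans)

lemma veq_high_labeled: "high_labeled A v1 \<Longrightarrow> high_labeled A v2 \<Longrightarrow> veq A \<beta> v1 v2"
  by (auto simp: high_labeled_def intro: veq.EqLabeledHigh)

lemma veq_high_labeled_iff: "veq A \<beta> v1 v2 \<Longrightarrow> high_labeled A v1 \<longleftrightarrow> high_labeled A v2"
  by (auto simp: high_labeled_def elim: veq.cases)

lemma high_pc_confinement: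
  shows "force \<Sigma> \<mu> pc e \<theta> \<Sigma>' \<mu>' pc' v \<Longrightarrow> \<not> pc \<le> A \<Longrightarrow>
           low_mems_unchanged A \<Sigma> \<Sigma>' \<and> heap_high_extension A \<mu> \<mu>' \<and> \<not> pc' \<le> A"
    and "teval \<Sigma> \<mu> pc t \<theta> \<Sigma>' \<mu>' pc' v \<Longrightarrow> \<not> pc \<le> A \<Longrightarrow>
           low_mems_unchanged A \<Sigma> \<Sigma>' \<and> heap_high_extension A \<mu> \<mu>' \<and> \<not> pc' \<le> A"
proof (induction rule: force_teval.inducts)
  case TBind
  then show ?case by (meson low_mems_unchanged_trans heap_high_extension_trans)
next
  case (TNewFS \<theta> e l v pc n \<mu> \<Sigma>)
  then show ?case
    by (simp add: low_mems_unchanged_refl heap_high_extension_def lupd_def nth_append)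
next
  case (TWriteFS \<theta> e1 n e2 l' v \<mu> l v0 pc \<Sigma>)
  then have "\<not> l \<le> A" by (meson order_trans)
  with TWriteFS show ?case
    by (auto simp: low_mems_unchanged_refl heap_high_extension_def high_labeled_def lupd_def
        nth_list_update)
qed (auto simp: low_mems_unchanged_def heap_high_extension_refl intro: order_trans)

lemma store_eq_low_mems_unchanged:
  "store_eq A \<beta> \<Sigma>1 \<Sigma>2 \<Longrightarrow> low_mems_unchanged A \<Sigma>1 \<Sigma>1' \<Longrightarrow> low_mems_unchanged A \<Sigma>2 \<Sigma>2' \<Longrightarrow>
   store_eq A \<beta> \<Sigma>1' \<Sigma>2'"
  by (simp add: store_eq_def mem_eq_def low_mems_unchanged_def)

lemma heap_eq_high_extension:
  assumes eq: "heap_eq A \<beta> \<mu>1 \<mu>2"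
    and ext1: "heap_high_extension A \<mu>1 \<mu>1'" and ext2: "heap_high_extension A \<mu>2 \<mu>2'"
  shows "heap_eq A \<beta> \<mu>1' \<mu>2'"
proof -
  have "veq A \<beta> (\<mu>1' ! n1) (\<mu>2' ! n2)" if \<beta>n: "\<beta> n1 = Some n2" for n1 n2
  proof -
    have "n1 < length \<mu>1" "n2 < length \<mu>2" "veq A \<beta> (\<mu>1 ! n1) (\<mu>2 ! n2)"
      using eq \<beta>n by (auto simp: heap_eq_def ran_def)
    with ext1 ext2 show ?thesis
      unfolding heap_high_extension_def by (metis veq_high_labeled veq_high_labeled_iff)
  qed
  with eq ext1 ext2 show ?thesis
    by (fastforce simp: heap_eq_def heap_high_extension_def)
qed

lemma high_pc_final_eq:
  assumes "\<not> pc1 \<le> A" "\<not> pc2 \<le> A" "store_eq A \<beta> \<Sigma>1 \<Sigma>2" "heap_eq A \<beta> \<mu>1 \<mu>2"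
  shows "force \<Sigma>1 \<mu>1 pc1 e1 \<theta>1 \<Sigma>1' \<mu>1' pc1' v1 \<Longrightarrow> force \<Sigma>2 \<mu>2 pc2 e2 \<theta>2 \<Sigma>2' \<mu>2' pc2' v2 \<Longrightarrow>
           final_eq A \<beta> (\<Sigma>1', \<mu>1', pc1', v1) (\<Sigma>2', \<mu>2', pc2', v2)"
    and "teval \<Sigma>1 \<mu>1 pc1 t1 \<theta>1 \<Sigma>1' \<mu>1' pc1' v1 \<Longrightarrow> teval \<Sigma>2 \<mu>2 pc2 t2 \<theta>2 \<Sigma>2' \<mu>2' pc2' v2 \<Longrightarrow>
           final_eq A \<beta> (\<Sigma>1', \<mu>1', pc1', v1) (\<Sigma>2', \<mu>2', pc2', v2)"
  using assms
  by (auto dest!: high_pc_confinement intro: store_eq_low_mems_unchanged heap_eq_high_extension)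

lemma lupd_less: "n < length xs \<Longrightarrow> lupd xs n x = xs[n := x]"
  by (simp add: lupd_def)

lemma list_all2_lupd:
  "list_all2 P xs ys \<Longrightarrow> P x y \<Longrightarrow> n \<le> length xs \<Longrightarrow> list_all2 P (lupd xs n x) (lupd ys n y)"
  by (auto simp: lupd_def list_all2_lengthD list_all2_appendI intro: list_all2_update_cong)

lemma store_eq_low_mem: "store_eq A \<beta> \<Sigma>1 \<Sigma>2 \<Longrightarrow> l \<le> A \<Longrightarrow> list_all2 (veq A \<beta>) (\<Sigma>1 l) (\<Sigma>2 l)"
  by (simp add: store_eq_def mem_eq_def)

lemma store_eq_upd_high_left: "\<not> l \<le> A \<Longrightarrow> store_eq A \<beta> (\<Sigma>1(l := M)) \<Sigma>2 \<longleftrightarrow> store_eq A \<beta> \<Sigma>1 \<Sigma>2"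
  unfolding store_eq_def mem_eq_def by (metis fun_upd_apply)

lemma store_eq_upd_high_right: "\<not> l \<le> A \<Longrightarrow> store_eq A \<beta> \<Sigma>1 (\<Sigma>2(l := M)) \<longleftrightarrow> store_eq A \<beta> \<Sigma>1 \<Sigma>2"
  unfolding store_eq_def mem_eq_def by (metis fun_upd_apply)

lemma store_eq_upd:
  "store_eq A \<beta> \<Sigma>1 \<Sigma>2 \<Longrightarrow> list_all2 (veq A \<beta>) M1 M2 \<Longrightarrow> store_eq A \<beta> (\<Sigma>1(l := M1)) (\<Sigma>2(l := M2))"
  by (auto simp: store_eq_def mem_eq_def list_all2_lengthD)

lemma store_eq_map_le_mono: "store_eq A \<beta> \<Sigma>1 \<Sigma>2 \<Longrightarrow> \<beta> \<subseteq>\<^sub>m \<beta>' \<Longrightarrow> store_eq A \<beta>' \<Sigma>1 \<Sigma>2"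
  unfolding store_eq_def mem_eq_def by (metis list_all2_veq_map_le_mono)

lemma store_eq_write:
  assumes "store_eq A \<beta> \<Sigma>1 \<Sigma>2" "veq A \<beta> (VRefI n1 l1) (VRefI n2 l2)"
    and "veq A \<beta> (VLabeled l1' w1) (VLabeled l2' w2)" "l1' \<le> l1" "n1 \<le> length (\<Sigma>1 l1)"
  shows "store_eq A \<beta> (\<Sigma>1(l1 := lupd (\<Sigma>1 l1) n1 w1)) (\<Sigma>2(l2 := lupd (\<Sigma>2 l2) n2 w2))"
proof (cases "l1 \<le> A")
  case True
  with assms(2-4) have "n2 = n1" "l2 = l1" "veq A \<beta> w1 w2"
    by (auto simp: veq_VRefI_iff veq_VLabeled_iff dest: order_trans)
  moreover have "list_all2 (veq A \<beta>) (\<Sigma>1 l1) (\<Sigma>2 l1)"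
    using assms(1) True by (rule store_eq_low_mem)
  ultimately show ?thesis
    using assms(1,5) by (simp add: store_eq_upd list_all2_lupd)
next
  case False
  with assms(2) have "\<not> l2 \<le> A"
    by (simp add: veq_VRefI_iff)
  with False assms(1) show ?thesis
    by (simp add: store_eq_upd_high_left store_eq_upd_high_right)
qed

lemma veq_fresh_VRefI:
  "store_eq A \<beta> \<Sigma>1 \<Sigma>2 \<Longrightarrow> veq A \<beta> (VLabeled l1 w1) (VLabeled l2 w2) \<Longrightarrow>
   veq A \<beta> (VRefI (length (\<Sigma>1 l1)) l1) (VRefI (length (\<Sigma>2 l2)) l2)"
  by (auto simp: veq_VLabeled_iff veq_VRefI_iff list_all2_lengthD[OF store_eq_low_mem])

lemma veq_store_read:
  assumes "store_eq A \<beta> \<Sigma>1 \<Sigma>2" "veq A \<beta> (VRefI n1 l1) (VRefI n2 l2)" "n1 < length (\<Sigma>1 l1)"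
  shows "veq A \<beta> (VLabeled l1 (\<Sigma>1 l1 ! n1)) (VLabeled l2 (\<Sigma>2 l2 ! n2))"
  using assms by (auto simp: veq_VRefI_iff veq_VLabeled_iff dest: store_eq_low_mem list_all2_nthD)

lemma pbij_fun_upd: "pbij \<beta> \<Longrightarrow> b \<notin> ran \<beta> \<Longrightarrow> pbij (\<beta>(a \<mapsto> b))"
  by (auto simp: pbij_def inj_on_def ran_def)

lemma heap_eq_fresh: "heap_eq A \<beta> \<mu>1 \<mu>2 \<Longrightarrow> length \<mu>1 \<notin> dom \<beta> \<and> length \<mu>2 \<notin> ran \<beta>"
  by (auto simp: heap_eq_def)

lemma heap_eq_append:
  assumes eq: "heap_eq A \<beta> \<mu>1 \<mu>2" and xy: "veq A \<beta> x y"
  shows "heap_eq A (\<beta>(length \<mu>1 \<mapsto> length \<mu>2)) (\<mu>1 @ [x]) (\<mu>2 @ [y])"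
proof -
  let ?\<beta>' = "\<beta>(length \<mu>1 \<mapsto> length \<mu>2)"
  have bounds: "dom \<beta> \<subseteq> {..<length \<mu>1}" "ran \<beta> \<subseteq> {..<length \<mu>2}"
    using eq by (simp_all add: heap_eq_def)
  then have ext: "\<beta> \<subseteq>\<^sub>m ?\<beta>'"
    by (auto simp: map_le_def)
  have "veq A ?\<beta>' ((\<mu>1 @ [x]) ! a) ((\<mu>2 @ [y]) ! b)" if ab: "?\<beta>' a = Some b" for a b
  proof (cases "a = length \<mu>1")
    case True
    with ab xy ext show ?thesis by (auto intro: veq_map_le_mono)
  next
    case False
    with ab have "\<beta> a = Some b" by simp
    with eq bounds have "a < length \<mu>1" "b < length \<mu>2" "veq A \<beta> (\<mu>1 ! a) (\<mu>2 ! b)"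
      by (auto simp: heap_eq_def ran_def)
    with ext show ?thesis by (auto simp: nth_append intro: veq_map_le_mono)
  qed
  moreover have "dom ?\<beta>' \<subseteq> {..<length (\<mu>1 @ [x])}" "ran ?\<beta>' \<subseteq> {..<length (\<mu>2 @ [y])}"
    using bounds by (auto simp: ran_def)
  ultimately show ?thesis
    by (simp add: heap_eq_def)
qed

lemma heap_eq_update:
  assumes "pbij \<beta>" "heap_eq A \<beta> \<mu>1 \<mu>2" "\<beta> n1 = Some n2" "veq A \<beta> x y"
  shows "heap_eq A \<beta> (\<mu>1[n1 := x]) (\<mu>2[n2 := y])"
proof -
  have "veq A \<beta> (\<mu>1[n1 := x] ! a) (\<mu>2[n2 := y] ! b)" if ab: "\<beta> a = Some b" for a b
  proof -
    have "a = n1 \<longleftrightarrow> b = n2"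
      using assms(1,3) ab unfolding pbij_def inj_on_def by (auto simp: dom_def)
    moreover have "a < length \<mu>1" "b < length \<mu>2" "veq A \<beta> (\<mu>1 ! a) (\<mu>2 ! b)"
      using assms(2) ab by (auto simp: heap_eq_def ran_def)
    ultimately show ?thesis
      using assms(4) by (cases "a = n1") auto
  qed
  with assms(2) show ?thesis
    by (simp add: heap_eq_def)
qed

lemma veq_heap_read:
  "heap_eq A \<beta> \<mu>1 \<mu>2 \<Longrightarrow> veq A \<beta> (VRefS n1) (VRefS n2) \<Longrightarrow> veq A \<beta> (\<mu>1 ! n1) (\<mu>2 ! n2)"
  by (simp add: heap_eq_def veq_VRefS_iff)

lemma veq_VRefI_label:
  "veq A \<beta> (VRefI n1 l1) (VRefI n2 l2) \<Longrightarrow> veq A \<beta> (VLabeled l1 VUnit) (VLabeled l2 VUnit)"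
  by (auto simp: veq_VRefI_iff veq_VLabeled_iff intro: veq.intros)

lemma veq_VLabeled_sup:
  "pc \<le> A \<Longrightarrow> veq A \<beta> (VLabeled l1 v1) (VLabeled l2 v2) \<Longrightarrow>
   veq A \<beta> (VLabeled (sup pc l1) v1) (VLabeled (sup pc l2) v2)"
  by (auto simp: veq_VLabeled_iff)

section \<open>Runs under a low program counter\<close>

definition final_eq_ext :: "'l::lattice \<Rightarrow> (nat \<rightharpoonup> nat) \<Rightarrow> 'l final \<Rightarrow> 'l final \<Rightarrow> bool" where
  "final_eq_ext A \<beta> f1 f2 \<longleftrightarrow> (\<exists>\<beta>'. pbij \<beta>' \<and> \<beta> \<subseteq>\<^sub>m \<beta>' \<and> final_eq A \<beta>' f1 f2)"

lemma final_eq_extI: "pbij \<beta> \<Longrightarrow> final_eq A \<beta> f1 f2 \<Longrightarrow> final_eq_ext A \<beta> f1 f2"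
  by (auto simp: final_eq_ext_def)

lemma final_eq_ext_map_le: "\<beta> \<subseteq>\<^sub>m \<beta>' \<Longrightarrow> final_eq_ext A \<beta>' f1 f2 \<Longrightarrow> final_eq_ext A \<beta> f1 f2"
  by (auto simp: final_eq_ext_def intro: map_le_trans)

lemma final_eq_sup_label:
  assumes "pc \<le> A" "store_eq A \<beta> \<Sigma>1 \<Sigma>2" "heap_eq A \<beta> \<mu>1 \<mu>2"
    and "veq A \<beta> (VLabeled l1 v1) (VLabeled l2 v2)"
  shows "final_eq A \<beta> (\<Sigma>1, \<mu>1, sup pc l1, v1) (\<Sigma>2, \<mu>2, sup pc l2, v2)"
    and "final_eq A \<beta> (\<Sigma>1, \<mu>1, sup pc l1, VLbl l1) (\<Sigma>2, \<mu>2, sup pc l2, VLbl l2)"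
  using assms by (auto simp: veq_VLabeled_iff veq_VLbl_iff)

lemma final_eq_VLabeled:
  "pc \<le> A \<Longrightarrow> final_eq A \<beta> (\<Sigma>1, \<mu>1, pc1, v1) (\<Sigma>2, \<mu>2, pc2, v2) \<Longrightarrow>
   final_eq A \<beta> (\<Sigma>1, \<mu>1, pc, VLabeled pc1 v1) (\<Sigma>2, \<mu>2, pc, VLabeled pc2 v2)"
  by (auto intro: veq.intros)

context
  fixes A :: "'l::lattice" and \<beta> \<Sigma>1 \<Sigma>2 \<mu>1 \<mu>2 \<theta>1 \<theta>2 pc
  assumes pc_low: "pc \<le> A" and stores: "store_eq A \<beta> \<Sigma>1 \<Sigma>2" and heaps: "heap_eq A \<beta> \<mu>1 \<mu>2"
    and envs: "env_eq A \<beta> \<theta>1 \<theta>2"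
begin

lemma low_Return_final_eq:
  "teval \<Sigma>1 \<mu>1 pc (Return e) \<theta>1 \<Sigma>1' \<mu>1' pc1 v1 \<Longrightarrow> teval \<Sigma>2 \<mu>2 pc (Return e) \<theta>2 \<Sigma>2' \<mu>2' pc2 v2 \<Longrightarrow>
   final_eq A \<beta> (\<Sigma>1', \<mu>1', pc1, v1) (\<Sigma>2', \<mu>2', pc2, v2)"
  by (elim teval_elims; drule (1) peval_veq[OF _ _ envs]) (simp add: pc_low stores heaps)

lemma low_Unlabel_final_eq:
  "teval \<Sigma>1 \<mu>1 pc (Unlabel e) \<theta>1 \<Sigma>1' \<mu>1' pc1 v1 \<Longrightarrow> teval \<Sigma>2 \<mu>2 pc (Unlabel e) \<theta>2 \<Sigma>2' \<mu>2' pc2 v2 \<Longrightarrow>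
   final_eq A \<beta> (\<Sigma>1', \<mu>1', pc1, v1) (\<Sigma>2', \<mu>2', pc2, v2)"
  by (elim teval_elims; drule (1) peval_veq[OF _ _ envs])
    (simp only: final_eq_sup_label(1)[OF pc_low stores heaps])

lemma low_LabelOf_final_eq:
  "teval \<Sigma>1 \<mu>1 pc (LabelOf e) \<theta>1 \<Sigma>1' \<mu>1' pc1 v1 \<Longrightarrow> teval \<Sigma>2 \<mu>2 pc (LabelOf e) \<theta>2 \<Sigma>2' \<mu>2' pc2 v2 \<Longrightarrow>
   final_eq A \<beta> (\<Sigma>1', \<mu>1', pc1, v1) (\<Sigma>2', \<mu>2', pc2, v2)"
  by (elim teval_elims; drule (1) peval_veq[OF _ _ envs])
    (simp only: final_eq_sup_label(2)[OF pc_low stores heaps])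

lemma low_Taint_final_eq:
  "teval \<Sigma>1 \<mu>1 pc (Taint e) \<theta>1 \<Sigma>1' \<mu>1' pc1 v1 \<Longrightarrow> teval \<Sigma>2 \<mu>2 pc (Taint e) \<theta>2 \<Sigma>2' \<mu>2' pc2 v2 \<Longrightarrow>
   final_eq A \<beta> (\<Sigma>1', \<mu>1', pc1, v1) (\<Sigma>2', \<mu>2', pc2, v2)"
  by (elim teval_elims; drule (1) peval_veq[OF _ _ envs])
    (auto simp: pc_low stores heaps veq_VLbl_iff intro: veq.intros)

lemma low_Read_final_eq:
  "teval \<Sigma>1 \<mu>1 pc (Read e) \<theta>1 \<Sigma>1' \<mu>1' pc1 v1 \<Longrightarrow> teval \<Sigma>2 \<mu>2 pc (Read e) \<theta>2 \<Sigma>2' \<mu>2' pc2 v2 \<Longrightarrow>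
   final_eq A \<beta> (\<Sigma>1', \<mu>1', pc1, v1) (\<Sigma>2', \<mu>2', pc2, v2)"
  by (elim teval_elims; drule (1) peval_veq[OF _ _ envs])
    (auto simp del: final_eq.simps simp: veq_VRefI_VRefS veq_VRefS_VRefI
      intro!: final_eq_sup_label(1)[OF pc_low stores heaps] veq_store_read[OF stores]
      dest: veq_heap_read[OF heaps])

lemma low_LabelOfRef_final_eq:
  "teval \<Sigma>1 \<mu>1 pc (LabelOfRef e) \<theta>1 \<Sigma>1' \<mu>1' pc1 v1 \<Longrightarrow>
   teval \<Sigma>2 \<mu>2 pc (LabelOfRef e) \<theta>2 \<Sigma>2' \<mu>2' pc2 v2 \<Longrightarrow>
   final_eq A \<beta> (\<Sigma>1', \<mu>1', pc1, v1) (\<Sigma>2', \<mu>2', pc2, v2)"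
  by (elim teval_elims; drule (1) peval_veq[OF _ _ envs])
    (auto simp del: final_eq.simps simp: veq_VRefI_VRefS veq_VRefS_VRefI
      intro!: final_eq_sup_label(2)[OF pc_low stores heaps] veq_VRefI_label
      dest: veq_heap_read[OF heaps])

lemma low_New_RefI_final_eq:
  "teval \<Sigma>1 \<mu>1 pc (New RefI e) \<theta>1 \<Sigma>1' \<mu>1' pc1 v1 \<Longrightarrow> teval \<Sigma>2 \<mu>2 pc (New RefI e) \<theta>2 \<Sigma>2' \<mu>2' pc2 v2 \<Longrightarrow>
   final_eq A \<beta> (\<Sigma>1', \<mu>1', pc1, v1) (\<Sigma>2', \<mu>2', pc2, v2)"
  by (elim teval_elims; drule (1) peval_veq[OF _ _ envs])
    (auto simp: pc_low heaps intro: store_eq_write[OF stores] veq_fresh_VRefI[OF stores])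

lemma low_New_RefS_final_eq_ext:
  assumes \<beta>: "pbij \<beta>"
    and run1: "teval \<Sigma>1 \<mu>1 pc (New RefS e) \<theta>1 \<Sigma>1' \<mu>1' pc1 v1"
    and run2: "teval \<Sigma>2 \<mu>2 pc (New RefS e) \<theta>2 \<Sigma>2' \<mu>2' pc2 v2"
  shows "final_eq_ext A \<beta> (\<Sigma>1', \<mu>1', pc1, v1) (\<Sigma>2', \<mu>2', pc2, v2)"
proof -
  obtain c1 c2 where cells: "veq A \<beta> c1 c2"
    and finals: "(\<Sigma>1', \<mu>1', pc1, v1) = (\<Sigma>1, \<mu>1 @ [c1], pc, VRefS (length \<mu>1))"
      "(\<Sigma>2', \<mu>2', pc2, v2) = (\<Sigma>2, \<mu>2 @ [c2], pc, VRefS (length \<mu>2))"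
    using run1 run2
    by - (elim teval_elims; drule (1) peval_veq[OF _ _ envs]; simp add: lupd_def)
  let ?\<beta>' = "\<beta>(length \<mu>1 \<mapsto> length \<mu>2)"
  have ext: "pbij ?\<beta>'" "\<beta> \<subseteq>\<^sub>m ?\<beta>'"
    using heap_eq_fresh[OF heaps] \<beta> by (auto simp: pbij_fun_upd map_le_def)
  have "final_eq A ?\<beta>' (\<Sigma>1', \<mu>1', pc1, v1) (\<Sigma>2', \<mu>2', pc2, v2)"
    using heap_eq_append[OF heaps cells] store_eq_map_le_mono[OF stores ext(2)] pc_low
    by (simp add: finals veq.EqAddr)
  with ext show ?thesis
    unfolding final_eq_ext_def by blast
qed

lemma low_Write_final_eq:
  "pbij \<beta> \<Longrightarrow> teval \<Sigma>1 \<mu>1 pc (Write e1 e2) \<theta>1 \<Sigma>1' \<mu>1' pc1 v1 \<Longrightarrow>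
   teval \<Sigma>2 \<mu>2 pc (Write e1 e2) \<theta>2 \<Sigma>2' \<mu>2' pc2 v2 \<Longrightarrow>
   final_eq A \<beta> (\<Sigma>1', \<mu>1', pc1, v1) (\<Sigma>2', \<mu>2', pc2, v2)"
  by (elim teval_elims; drule (1) peval_veq[OF _ _ envs]; drule (1) peval_veq[OF _ _ envs])
    (auto simp: veq_VRefI_VRefS veq_VRefS_VRefI veq_VRefS_iff lupd_less pc_low stores heaps
      intro: store_eq_write[OF stores] heap_eq_update[OF _ heaps] veq_VLabeled_sup[OF pc_low]
        veq.EqUnit)

end

lemma low_pc_final_eq_ext:
  shows "force \<Sigma>1 \<mu>1 pc e \<theta>1 \<Sigma>1' \<mu>1' pc1 v1 \<Longrightarrow> force \<Sigma>2 \<mu>2 pc e \<theta>2 \<Sigma>2' \<mu>2' pc2 v2 \<Longrightarrow>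
           pc \<le> A \<Longrightarrow> pbij \<beta> \<Longrightarrow> store_eq A \<beta> \<Sigma>1 \<Sigma>2 \<Longrightarrow> heap_eq A \<beta> \<mu>1 \<mu>2 \<Longrightarrow>
           env_eq A \<beta> \<theta>1 \<theta>2 \<Longrightarrow> final_eq_ext A \<beta> (\<Sigma>1', \<mu>1', pc1, v1) (\<Sigma>2', \<mu>2', pc2, v2)"
    and "teval \<Sigma>1 \<mu>1 pc t \<theta>1 \<Sigma>1' \<mu>1' pc1 v1 \<Longrightarrow> teval \<Sigma>2 \<mu>2 pc t \<theta>2 \<Sigma>2' \<mu>2' pc2 v2 \<Longrightarrow>
           pc \<le> A \<Longrightarrow> pbij \<beta> \<Longrightarrow> store_eq A \<beta> \<Sigma>1 \<Sigma>2 \<Longrightarrow> heap_eq A \<beta> \<mu>1 \<mu>2 \<Longrightarrow>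
           env_eq A \<beta> \<theta>1 \<theta>2 \<Longrightarrow> final_eq_ext A \<beta> (\<Sigma>1', \<mu>1', pc1, v1) (\<Sigma>2', \<mu>2', pc2, v2)"
proof (induction arbitrary: \<beta> \<Sigma>2 \<mu>2 \<theta>2 \<Sigma>2' \<mu>2' pc2 v2 and \<beta> \<Sigma>2 \<mu>2 \<theta>2 \<Sigma>2' \<mu>2' pc2 v2
    rule: force_teval.inducts)
  case (Force \<theta>1 e t \<theta>1' \<Sigma>1 \<mu>1 pc \<Sigma>1' \<mu>1' pc1 v1)
  from Force.prems(1) obtain t2 \<theta>2' where
    thunk2: "peval \<theta>2 e (VThunk t2 \<theta>2')" and run2: "teval \<Sigma>2 \<mu>2 pc t2 \<theta>2' \<Sigma>2' \<mu>2' pc2 v2"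
    by (rule force_elim)
  from peval_veq[OF Force.hyps(1) thunk2 Force.prems(6)] have "t2 = t" "env_eq A \<beta> \<theta>1' \<theta>2'"
    by (simp_all add: veq_VThunk_iff env_eq_def)
  with Force.IH Force.prems(2-5) run2 show ?case
    by blast
next
  case (TBind \<Sigma>1 \<mu>1 pc e1 \<theta>1 \<Sigma>1' \<mu>1' pc1' w1 e2 \<Sigma>1'' \<mu>1'' pc1'' v1)
  from TBind.prems(1) obtain \<Sigma>2m \<mu>2m pc2m w2 where
    first2: "force \<Sigma>2 \<mu>2 pc e1 \<theta>2 \<Sigma>2m \<mu>2m pc2m w2" and
    second2: "force \<Sigma>2m \<mu>2m pc2m e2 (w2 # \<theta>2) \<Sigma>2' \<mu>2' pc2 v2"
    by (elim teval_elims)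
  from TBind.IH(1)[OF first2 TBind.prems(2-6)] obtain \<beta>1 where
    \<beta>1: "pbij \<beta>1" "\<beta> \<subseteq>\<^sub>m \<beta>1" and mid: "final_eq A \<beta>1 (\<Sigma>1', \<mu>1', pc1', w1) (\<Sigma>2m, \<mu>2m, pc2m, w2)"
    unfolding final_eq_ext_def by blast
  have "final_eq_ext A \<beta>1 (\<Sigma>1'', \<mu>1'', pc1'', v1) (\<Sigma>2', \<mu>2', pc2, v2)"
  proof (cases "pc1' \<le> A")
    case True
    with mid have "pc2m = pc1'" "store_eq A \<beta>1 \<Sigma>1' \<Sigma>2m" "heap_eq A \<beta>1 \<mu>1' \<mu>2m" "veq A \<beta>1 w1 w2"
      by auto
    moreover have "list_all2 (veq A \<beta>1) \<theta>1 \<theta>2"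
      using TBind.prems(6) \<beta>1(2) by (simp add: env_eq_def list_all2_veq_map_le_mono)
    ultimately show ?thesis
      using TBind.IH(2)[OF _ True \<beta>1(1)] second2 by (simp add: env_eq_def)
  next
    case False
    with mid TBind.hyps(2) second2 \<beta>1(1) show ?thesis
      by (auto intro: final_eq_extI high_pc_final_eq(1))
  qed
  with \<beta>1(2) show ?case
    by (rule final_eq_ext_map_le)
next
  case (TToLabeled \<Sigma>1 \<mu>1 pc e \<theta>1 \<Sigma>1' \<mu>1' pc1' v1)
  from TToLabeled.prems(1) obtain pc2' w2 where
    "pc2 = pc" "v2 = VLabeled pc2' w2" and run2: "force \<Sigma>2 \<mu>2 pc e \<theta>2 \<Sigma>2' \<mu>2' pc2' w2"
    by (elim teval_elims) auto
  with TToLabeled.IH[OF run2 TToLabeled.prems(2-6)] TToLabeled.prems(2) show ?case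
    unfolding final_eq_ext_def by (blast intro: final_eq_VLabeled)
next
  case TGetLabel
  then show ?case by (auto elim!: teval_elims intro!: final_eq_extI veq.intros)
qed (blast intro: final_eq_extI force_teval.intros low_Return_final_eq low_Unlabel_final_eq
    low_LabelOf_final_eq low_Taint_final_eq low_Read_final_eq low_LabelOfRef_final_eq
    low_New_RefI_final_eq low_New_RefS_final_eq_ext low_Write_final_eq)+

lemma noninterference:
  shows "force \<Sigma>1 \<mu>1 pc e \<theta>1 \<Sigma>1' \<mu>1' pc1 v1 \<Longrightarrow> force \<Sigma>2 \<mu>2 pc e \<theta>2 \<Sigma>2' \<mu>2' pc2 v2 \<Longrightarrow>
           pbij \<beta> \<Longrightarrow> store_eq A \<beta> \<Sigma>1 \<Sigma>2 \<Longrightarrow> heap_eq A \<beta> \<mu>1 \<mu>2 \<Longrightarrow> env_eq A \<beta> \<theta>1 \<theta>2 \<Longrightarrow>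
           final_eq_ext A \<beta> (\<Sigma>1', \<mu>1', pc1, v1) (\<Sigma>2', \<mu>2', pc2, v2)"
    and "teval \<Sigma>1 \<mu>1 pc t \<theta>1 \<Sigma>1' \<mu>1' pc1 v1 \<Longrightarrow> teval \<Sigma>2 \<mu>2 pc t \<theta>2 \<Sigma>2' \<mu>2' pc2 v2 \<Longrightarrow>
           pbij \<beta> \<Longrightarrow> store_eq A \<beta> \<Sigma>1 \<Sigma>2 \<Longrightarrow> heap_eq A \<beta> \<mu>1 \<mu>2 \<Longrightarrow> env_eq A \<beta> \<theta>1 \<theta>2 \<Longrightarrow>
           final_eq_ext A \<beta> (\<Sigma>1', \<mu>1', pc1, v1) (\<Sigma>2', \<mu>2', pc2, v2)"
  by (metis low_pc_final_eq_ext high_pc_final_eq final_eq_extI)+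

theorem mainTheorem4:
  fixes A :: "'l::lattice"
    and \<beta> :: "nat \<rightharpoonup> nat"
    and c1 c2 :: "'l config"
    and \<theta>1 \<theta>2 :: "'l env"
    and f1 f2 :: "'l final"
  assumes "pbij \<beta>"
    and "valid_cfg c1 \<theta>1" and "valid_cfg c2 \<theta>2"
    and "cfg_eq A \<beta> c1 c2"
    and "env_eq A \<beta> \<theta>1 \<theta>2"
    and "cfg_eval c1 \<theta>1 f1" and "cfg_eval c2 \<theta>2 f2"
  shows "\<exists>\<beta>'. pbij \<beta>' \<and> \<beta> \<subseteq>\<^sub>m \<beta>' \<and> final_eq A \<beta>' f1 f2"
proof -
  from assms(6,7,4) have "final_eq_ext A \<beta> f1 f2"
    by (elim cfg_eval.cases) (auto intro: noninterference assms(1,5))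
  then show ?thesis
    unfolding final_eq_ext_def .
qed

end
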